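(* Consider the real-valued block-sparse setting in the context with Gaussian noise $w\sim N(0,\sigma^2 I_L)$, and let $x\in\mathcal{X}$. (a) If $x$ has fewer than $k$ nonzero blocks ($s<k$), then no estimator with finite variance is $\mathcal{X}$-unbiased at $x$. (b) If $x$ has exactly $k$ nonzero blocks ($s=k$), then every estimator $\hat x$ (with finite variance) that is $\mathcal{X}$-unbiased at $x$ satisfies $$\mathrm{MSE}(\hat x,x)\ge \sigma^2\,\mathrm{Tr}\big((D_S^TD_S)^{-1}\big).$$
   Context: Setting: $N=Md$. For $v\in\mathbb{R}^N$, $v[i]=(v_{(i-1)d+1},\dots,v_{id})^T$ is its $i$-th block; for a matrix $A$ with $N$ columns, $A[i]$ is the submatrix of columns $(i-1)d+1,\dots,id$. The block support is $\mathrm{supp}(v)=\{i:v[i]\ne0\}$; for $I=\{i_1<\dots<i_p\}$, $A_I=[A[i_1],\dots,A[i_p]]$. The constraint set is $\mathcal{X}=\{v\in\mathbb{R}^N: |\mathrm{supp}(v)|\le k\}$. The deterministic unknown $x\in\mathcal{X}$, $S=\mathrm{supp}(x)$, $s=|S|$. Observations $y=Dx+w$, $D\in\mathbb{R}^{L\times N}$ known with unit-norm columns, $L<N$, $D_I$ of full column rank whenever $|I|\le k$; $w\sim N(0,\sigma^2 I_L)$. An estimator is a (measurable) function $\hat x(y)$; its bias is $b(x)=\mathbb{E}_x[\hat x]-x$ and $\mathrm{MSE}(\hat x,x)=\mathbb{E}_x\|\hat x-x\|_2^2$, where $\mathbb{E}_x$ denotes expectation when the true parameter is $x$. A vector $v\in\mathbb{R}^N$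 is a feasible direction at $x$ if $x+\alpha v\in\mathcal{X}$ for all sufficiently small $|\alpha|$. An estimator $\hat x$ is $\mathcal{X}$-unbiased at $x$ if $\mathbb{E}_x[\hat x]=x$ and $\frac{\partial}{\partial\alpha}b(x+\alpha v)\big|_{\alpha=0}=0$ for every feasible direction $v$ at $x$. *)

theory Defs
  imports "HOL-Probability.Probability" "Jordan_Normal_Form.Matrix"
begin

(* Conventions: vectors of R^n are functions nat => real, only the entries 0..<n matter;
   indices are 0-based. Block i (i < M) of v in R^(M*d) consists of entries i*d ..< i*d+d.
   D :: nat => nat => real is the L x N matrix with entries D j l (j < L, l < N). *)

definition vecs :: "nat \<Rightarrow> (nat \<Rightarrow> real) set" where
  "vecs n = {v. \<forall>l\<ge>n. v l = 0}"

definition bsupp :: "nat \<Rightarrow> nat \<Rightarrow> (nat \<Rightarrow> real) \<Rightarrow> nat set" where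
  "bsupp M d v = {i. i < M \<and> (\<exists>j<d. v (i * d + j) \<noteq> 0)}"

definition Xset :: "nat \<Rightarrow> nat \<Rightarrow> nat \<Rightarrow> (nat \<Rightarrow> real) set" where
  "Xset M d k = {v \<in> vecs (M * d). card (bsupp M d v) \<le> k}"

definition feasible_dir :: "nat \<Rightarrow> nat \<Rightarrow> nat \<Rightarrow> (nat \<Rightarrow> real) \<Rightarrow> (nat \<Rightarrow> real) \<Rightarrow> bool" where
  "feasible_dir M d k x v \<longleftrightarrow> v \<in> vecs (M * d) \<and>
     (\<exists>\<epsilon>>0. \<forall>\<alpha>::real. \<bar>\<alpha>\<bar> < \<epsilon> \<longrightarrow> (\<lambda>l. x l + \<alpha> * v l) \<in> Xset M d k)"

definition matvec :: "nat \<Rightarrow> nat \<Rightarrow> (nat \<Rightarrow> nat \<Rightarrow> real) \<Rightarrow> (nat \<Rightarrow> real) \<Rightarrow> (nat \<Rightarrow> real)" where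
  "matvec L N D v = (\<lambda>j. if j < L then (\<Sum>l<N. D j l * v l) else 0)"

definition obs_space :: "nat \<Rightarrow> (nat \<Rightarrow> real) measure" where
  "obs_space L = PiM {..<L} (\<lambda>_. borel)"

definition noise :: "nat \<Rightarrow> real \<Rightarrow> (nat \<Rightarrow> real) measure" where
  "noise L \<sigma> = PiM {..<L} (\<lambda>_. density lborel (normal_density 0 \<sigma>))"

definition obs :: "nat \<Rightarrow> nat \<Rightarrow> (nat \<Rightarrow> nat \<Rightarrow> real) \<Rightarrow> real \<Rightarrow> (nat \<Rightarrow> real) \<Rightarrow> (nat \<Rightarrow> real) measure" where
  "obs L N D \<sigma> x = distr (noise L \<sigma>) (obs_space L)
      (\<lambda>w. restrict (\<lambda>j. matvec L N D x j + w j) {..<L})"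

definition estimator :: "nat \<Rightarrow> nat \<Rightarrow> ((nat \<Rightarrow> real) \<Rightarrow> (nat \<Rightarrow> real)) \<Rightarrow> bool" where
  "estimator L N xh \<longleftrightarrow> (\<forall>l<N. (\<lambda>y. xh y l) \<in> borel_measurable (obs_space L))"

definition finite_var :: "nat \<Rightarrow> nat \<Rightarrow> (nat \<Rightarrow> nat \<Rightarrow> real) \<Rightarrow> real \<Rightarrow> ((nat \<Rightarrow> real) \<Rightarrow> (nat \<Rightarrow> real)) \<Rightarrow> (nat \<Rightarrow> real) \<Rightarrow> bool" where
  "finite_var L N D \<sigma> xh x \<longleftrightarrow> (\<forall>l<N. integrable (obs L N D \<sigma> x) (\<lambda>y. (xh y l)\<^sup>2))"

definition bias :: "nat \<Rightarrow> nat \<Rightarrow> (nat \<Rightarrow> nat \<Rightarrow> real) \<Rightarrow> real \<Rightarrow> ((nat \<Rightarrow> real) \<Rightarrow> (nat \<Rightarrow> real)) \<Rightarrow> (nat \<Rightarrow> real) \<Rightarrow> nat \<Rightarrow> real" where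
  "bias L N D \<sigma> xh x l = (\<integral>y. xh y l \<partial>obs L N D \<sigma> x) - x l"

definition X_unbiased :: "nat \<Rightarrow> nat \<Rightarrow> nat \<Rightarrow> nat \<Rightarrow> (nat \<Rightarrow> nat \<Rightarrow> real) \<Rightarrow> real \<Rightarrow> ((nat \<Rightarrow> real) \<Rightarrow> (nat \<Rightarrow> real)) \<Rightarrow> (nat \<Rightarrow> real) \<Rightarrow> bool" where
  "X_unbiased L M d k D \<sigma> xh x \<longleftrightarrow>
     (\<forall>l<M * d. bias L (M * d) D \<sigma> xh x l = 0) \<and>
     (\<forall>v. feasible_dir M d k x v \<longrightarrow>
        (\<forall>l<M * d. ((\<lambda>\<alpha>. bias L (M * d) D \<sigma> xh (\<lambda>i. x i + \<alpha> * v i) l) has_real_derivative 0) (at 0)))"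

definition MSE :: "nat \<Rightarrow> nat \<Rightarrow> (nat \<Rightarrow> nat \<Rightarrow> real) \<Rightarrow> real \<Rightarrow> ((nat \<Rightarrow> real) \<Rightarrow> (nat \<Rightarrow> real)) \<Rightarrow> (nat \<Rightarrow> real) \<Rightarrow> real" where
  "MSE L N D \<sigma> xh x = (\<integral>y. (\<Sum>l<N. (xh y l - x l)\<^sup>2) \<partial>obs L N D \<sigma> x)"

definition block_cols :: "nat \<Rightarrow> nat \<Rightarrow> nat set \<Rightarrow> nat list" where
  "block_cols M d I = filter (\<lambda>l. l div d \<in> I) [0..<M * d]"

definition subD :: "nat \<Rightarrow> nat \<Rightarrow> nat \<Rightarrow> (nat \<Rightarrow> nat \<Rightarrow> real) \<Rightarrow> nat set \<Rightarrow> real mat" where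
  "subD L M d D I = (let cs = block_cols M d I in mat L (length cs) (\<lambda>(j, c). D j (cs ! c)))"

definition full_col_rank :: "real mat \<Rightarrow> bool" where
  "full_col_rank A \<longleftrightarrow> (\<forall>c \<in> carrier_vec (dim_col A). A *\<^sub>v c = 0\<^sub>v (dim_row A) \<longrightarrow> c = 0\<^sub>v (dim_col A))"

definition mat_inv :: "real mat \<Rightarrow> real mat" where
  "mat_inv A = (SOME B. inverts_mat A B \<and> inverts_mat B A)"

definition mat_trace :: "real mat \<Rightarrow> real" where
  "mat_trace A = (\<Sum>i<dim_row A. A $$ (i, i))"

end

theory Submission
  imports Defs "Jordan_Normal_Form.Determinant"
begin

text \<open>
  Under the parameter \<open>x\<close> the observation \<open>y = D x + w\<close> is Gaussian with mean \<open>D x\<close>.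
  Shifting the mean by \<open>\<alpha> u\<close> multiplies the density by the likelihood ratio
  \<open>exp (\<alpha> \<cdot> score\<^sub>u - \<alpha>\<^sup>2 \<cdot> kl\<^sub>u)\<close>; bounding its second-order remainder gives the score identity
  \<open>d/d\<alpha> E\<^sub>a\<^sub>+\<^sub>\<alpha>\<^sub>u[f] = E\<^sub>a[f \<cdot> score\<^sub>u]\<close> at \<open>\<alpha> = 0\<close> for square-integrable \<open>f\<close>, and from it
  the mean and covariance \<open>\<sigma>\<^sup>2 I\<close> of the noise.

  For an \<open>\<X>\<close>-unbiased estimator the bias is stationary along every feasible coordinate
  direction \<open>e\<^sub>l\<close> (those in active blocks, and all of them if a block is free); the score
  identity turns this into \<open>\<Sum>\<^sub>j D\<^sub>j\<^sub>l C\<^sub>m\<^sub>j = \<sigma>\<^sup>2 \<delta>\<^sub>l\<^sub>m\<close> for the cross moments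
  \<open>C\<^sub>m\<^sub>j = E[xh\<^sub>m (y\<^sub>j - (D x)\<^sub>j)]\<close>.
  (a) If fewer than \<open>k\<close> blocks are active this holds for all \<open>l\<close>; applied to a nonzero
      kernel vector of \<open>D\<close> (which exists as \<open>L < N\<close>) it gives a contradiction.
  (b) For a column \<open>i\<close> of \<open>D\<^sub>S\<close>, expanding \<open>E[(xh\<^sub>m - x\<^sub>m - \<langle>r, y - D x\<rangle>)\<^sup>2] \<ge> 0\<close> with
      \<open>r = D\<^sub>S (D\<^sub>S\<^sup>T D\<^sub>S)\<^sup>-\<^sup>1 e\<^sub>i\<close> bounds the error of that coordinate by \<open>\<sigma>\<^sup>2 (D\<^sub>S\<^sup>T D\<^sub>S)\<^sup>-\<^sup>1\<^sub>i\<^sub>i\<close>;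
      summing over the active coordinates gives the trace bound.
\<close>

section \<open>The Gaussian observation model\<close>

definition gauss :: "nat \<Rightarrow> real \<Rightarrow> (nat \<Rightarrow> real) \<Rightarrow> (nat \<Rightarrow> real) measure" where
  "gauss L \<sigma> a = PiM {..<L} (\<lambda>j. density lborel (normal_density (a j) \<sigma>))"

lemma product_sigma_finite_normals:
  "\<sigma> > 0 \<Longrightarrow> product_sigma_finite (\<lambda>j. density lborel (normal_density (a j) \<sigma>))"
  using product_prob_spaceI[of "\<lambda>j. density lborel (normal_density (a j) \<sigma>)"]
  by (simp add: product_prob_space_def prob_space_normal_density)

lemma prob_space_gauss: "\<sigma> > 0 \<Longrightarrow> prob_space (gauss L \<sigma> a)"
  unfolding gauss_def by (rule prob_space_PiM) (rule prob_space_normal_density)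

lemma sets_gauss: "sets (gauss L \<sigma> a) = sets (obs_space L)"
  unfolding gauss_def obs_space_def by (intro sets_PiM_cong) auto

lemma measurable_gauss[measurable_cong]: "measurable (gauss L \<sigma> a) N = measurable (obs_space L) N"
  by (rule measurable_cong_sets[OF sets_gauss refl])

lemma gauss_cong: "(\<And>j. j < L \<Longrightarrow> a j = b j) \<Longrightarrow> gauss L \<sigma> a = gauss L \<sigma> b"
  unfolding gauss_def by (intro PiM_cong) auto

lemma emeasure_normal_translate:
  assumes A[measurable]: "A \<in> sets borel"
  shows "emeasure (density lborel (normal_density m \<sigma>)) A
       = emeasure (density lborel (normal_density 0 \<sigma>)) {w. m + w \<in> A}"
proof -
  have "(\<lambda>w. m + w) -` A \<in> sets borel"
    by (rule measurable_sets_borel[OF _ A]) simp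
  then have [measurable]: "{w. m + w \<in> A} \<in> sets borel" by (simp add: vimage_def)
  have "emeasure (density lborel (normal_density m \<sigma>)) A
     = (\<integral>\<^sup>+ y. ennreal (normal_density m \<sigma> y) * indicator A y \<partial>lborel)"
    by (simp add: emeasure_density)
  also have "\<dots> = (\<integral>\<^sup>+ w. ennreal (normal_density m \<sigma> (m + w)) * indicator A (m + w) \<partial>lborel)"
    using nn_integral_real_affine[where c = 1 and t = m,
        of "\<lambda>y. ennreal (normal_density m \<sigma> y) * indicator A y"] by simp
  also have "\<dots> = (\<integral>\<^sup>+ w. ennreal (normal_density 0 \<sigma> w) * indicator {w. m + w \<in> A} w \<partial>lborel)"
    by (intro nn_integral_cong) (simp add: normal_density_def indicator_def)
  also have "\<dots> = emeasure (density lborel (normal_density 0 \<sigma>)) {w. m + w \<in> A}"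
    by (simp add: emeasure_density)
  finally show ?thesis .
qed

lemma distr_noise_translate:
  assumes sp: "\<sigma> > 0"
  shows "distr (noise L \<sigma>) (obs_space L) (\<lambda>w. restrict (\<lambda>j. m j + w j) {..<L}) = gauss L \<sigma> m"
proof -
  interpret P: product_sigma_finite "\<lambda>j. density lborel (normal_density (m j) \<sigma>)"
    by (rule product_sigma_finite_normals[OF sp])
  interpret N0: product_sigma_finite "\<lambda>j. density lborel (normal_density ((\<lambda>_. 0) j) \<sigma>)"
    by (rule product_sigma_finite_normals[OF sp])
  define tr where "tr = (\<lambda>w. restrict (\<lambda>j. m j + w j) {..<L})"
  have meas: "tr \<in> measurable (noise L \<sigma>) (obs_space L)"
    unfolding tr_def noise_def obs_space_def by (rule measurable_restrict) measurable
  show ?thesis unfolding gauss_def tr_def[symmetric]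
  proof (rule P.PiM_eqI)
    show "sets (distr (noise L \<sigma>) (obs_space L) tr)
       = sets (Pi\<^sub>M {..<L} (\<lambda>j. density lborel (normal_density (m j) \<sigma>)))"
      unfolding sets_distr obs_space_def by (rule sets_PiM_cong) auto
    fix A assume A: "\<And>i. i \<in> {..<L} \<Longrightarrow> A i \<in> sets (density lborel (normal_density (m i) \<sigma>))"
    have Ab: "A i \<in> sets borel" if "i < L" for i using A[of i] that by auto
    have Ab': "{w. m j + w \<in> A j} \<in> sets borel" if "j < L" for j
      using measurable_sets_borel[OF _ Ab[OF that], of "\<lambda>w. m j + w"] by (simp add: vimage_def)
    have PiE_in: "Pi\<^sub>E {..<L} A \<in> sets (obs_space L)"
      unfolding obs_space_def using Ab by (intro sets_PiM_I_finite) auto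
    have "tr -` Pi\<^sub>E {..<L} A \<inter> space (noise L \<sigma>) = Pi\<^sub>E {..<L} (\<lambda>j. {w. m j + w \<in> A j})"
      unfolding tr_def noise_def space_PiM vimage_def PiE_iff by auto
    then have "emeasure (distr (noise L \<sigma>) (obs_space L) tr) (Pi\<^sub>E {..<L} A)
       = emeasure (noise L \<sigma>) (Pi\<^sub>E {..<L} (\<lambda>j. {w. m j + w \<in> A j}))"
      by (simp add: emeasure_distr[OF meas PiE_in])
    also have "\<dots> = (\<Prod>j<L. emeasure (density lborel (normal_density 0 \<sigma>)) {w. m j + w \<in> A j})"
      unfolding noise_def by (rule N0.emeasure_PiM) (use Ab' in auto)
    also have "\<dots> = (\<Prod>j<L. emeasure (density lborel (normal_density (m j) \<sigma>)) (A j))"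
      using emeasure_normal_translate[OF Ab, symmetric] by (intro prod.cong refl) auto
    finally show "emeasure (distr (noise L \<sigma>) (obs_space L) tr) (Pi\<^sub>E {..<L} A)
       = (\<Prod>j\<in>{..<L}. emeasure (density lborel (normal_density (m j) \<sigma>)) (A j))" by simp
  qed simp
qed

lemma obs_eq_gauss: "\<sigma> > 0 \<Longrightarrow> obs L N D \<sigma> x = gauss L \<sigma> (matvec L N D x)"
  unfolding obs_def by (rule distr_noise_translate)

section \<open>Change of mean: the likelihood ratio\<close>

text \<open>Density of \<open>N(a + \<delta>, \<sigma>\<^sup>2)\<close> with respect to \<open>N(a, \<sigma>\<^sup>2)\<close>, evaluated at \<open>z\<close>.\<close>

definition lr_factor :: "real \<Rightarrow> real \<Rightarrow> real \<Rightarrow> real \<Rightarrow> real" where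
  "lr_factor \<sigma> a \<delta> z = exp (\<delta> * (z - a) / \<sigma>\<^sup>2 - \<delta>\<^sup>2 / (2 * \<sigma>\<^sup>2))"

lemma normal_density_translate_factor:
  assumes "\<sigma> > 0"
  shows "normal_density (a + \<delta>) \<sigma> z = normal_density a \<sigma> z * lr_factor \<sigma> a \<delta> z"
proof -
  have "-(z - (a + \<delta>))\<^sup>2 / (2 * \<sigma>\<^sup>2)
      = -(z - a)\<^sup>2 / (2 * \<sigma>\<^sup>2) + (\<delta> * (z - a) / \<sigma>\<^sup>2 - \<delta>\<^sup>2 / (2 * \<sigma>\<^sup>2))"
    using assms by (simp add: field_simps power2_eq_square)
  then have "exp (-(z - (a + \<delta>))\<^sup>2 / (2 * \<sigma>\<^sup>2))
      = exp (-(z - a)\<^sup>2 / (2 * \<sigma>\<^sup>2)) * exp (\<delta> * (z - a) / \<sigma>\<^sup>2 - \<delta>\<^sup>2 / (2 * \<sigma>\<^sup>2))"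
    by (simp only: exp_add)
  then show ?thesis
    unfolding normal_density_def lr_factor_def by (simp only: mult.assoc)
qed

lemma nn_integral_lr_factor:
  assumes sp: "\<sigma> > 0" and [measurable]: "A \<in> sets borel"
  shows "(\<integral>\<^sup>+ z. ennreal (lr_factor \<sigma> a \<delta> z) * indicator A z \<partial>density lborel (normal_density a \<sigma>))
       = emeasure (density lborel (normal_density (a + \<delta>) \<sigma>)) A"
proof -
  have "(\<integral>\<^sup>+ z. ennreal (lr_factor \<sigma> a \<delta> z) * indicator A z \<partial>density lborel (normal_density a \<sigma>))
      = (\<integral>\<^sup>+ z. ennreal (normal_density a \<sigma> z) * (ennreal (lr_factor \<sigma> a \<delta> z) * indicator A z) \<partial>lborel)"
    by (rule nn_integral_density) (unfold lr_factor_def, measurable)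
  also have "\<dots> = (\<integral>\<^sup>+ z. ennreal (normal_density (a + \<delta>) \<sigma> z) * indicator A z \<partial>lborel)"
    by (intro nn_integral_cong)
       (simp add: normal_density_translate_factor[OF sp] ennreal_mult' lr_factor_def mult.assoc)
  also have "\<dots> = emeasure (density lborel (normal_density (a + \<delta>) \<sigma>)) A"
    by (rule emeasure_density[symmetric]) measurable
  finally show ?thesis .
qed

definition likelihood_ratio :: "nat \<Rightarrow> real \<Rightarrow> (nat \<Rightarrow> real) \<Rightarrow> (nat \<Rightarrow> real) \<Rightarrow> (nat \<Rightarrow> real) \<Rightarrow> real" where
  "likelihood_ratio L \<sigma> a \<delta> y = (\<Prod>j<L. lr_factor \<sigma> (a j) (\<delta> j) (y j))"

lemma likelihood_ratio_nonneg: "0 \<le> likelihood_ratio L \<sigma> a \<delta> y"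
  unfolding likelihood_ratio_def lr_factor_def by (intro prod_nonneg) simp

lemma likelihood_ratio_measurable[measurable]:
  "likelihood_ratio L \<sigma> a \<delta> \<in> borel_measurable (obs_space L)"
  unfolding likelihood_ratio_def lr_factor_def obs_space_def by measurable

lemma likelihood_ratio_indicator_box:
  assumes "y \<in> space (gauss L \<sigma> a)"
  shows "ennreal (likelihood_ratio L \<sigma> a \<delta> y) * indicator (Pi\<^sub>E {..<L} A) y
       = (\<Prod>j<L. ennreal (lr_factor \<sigma> (a j) (\<delta> j) (y j)) * indicator (A j) (y j))"
proof -
  have y: "y \<in> Pi\<^sub>E {..<L} (\<lambda>_. UNIV)" using assms by (simp add: gauss_def space_PiM)
  have "(\<Prod>j<L. indicator (A j) (y j) :: ennreal) = indicator (Pi\<^sub>E {..<L} A) y"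
    using y by (auto simp: indicator_def PiE_iff)
  moreover have "(\<Prod>j<L. ennreal (lr_factor \<sigma> (a j) (\<delta> j) (y j))) = ennreal (likelihood_ratio L \<sigma> a \<delta> y)"
    unfolding likelihood_ratio_def by (rule prod_ennreal) (simp add: lr_factor_def)
  ultimately show ?thesis by (simp add: prod.distrib)
qed

lemma gauss_translate_density:
  assumes sp: "\<sigma> > 0"
  shows "gauss L \<sigma> (\<lambda>j. a j + \<delta> j) = density (gauss L \<sigma> a) (likelihood_ratio L \<sigma> a \<delta>)"
proof -
  interpret P: product_sigma_finite "\<lambda>j. density lborel (normal_density (a j + \<delta> j) \<sigma>)"
    by (rule product_sigma_finite_normals[OF sp])
  interpret P0: product_sigma_finite "\<lambda>j. density lborel (normal_density (a j) \<sigma>)"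
    by (rule product_sigma_finite_normals[OF sp])
  have rm: "(\<lambda>y. ennreal (likelihood_ratio L \<sigma> a \<delta> y)) \<in> borel_measurable (gauss L \<sigma> a)"
    unfolding measurable_gauss by measurable
  show ?thesis unfolding gauss_def[of L \<sigma> "\<lambda>j. a j + \<delta> j"]
  proof (rule P.PiM_eqI[symmetric])
    show "sets (density (gauss L \<sigma> a) (likelihood_ratio L \<sigma> a \<delta>))
       = sets (Pi\<^sub>M {..<L} (\<lambda>j. density lborel (normal_density (a j + \<delta> j) \<sigma>)))"
      unfolding sets_density gauss_def by (rule sets_PiM_cong) auto
    fix A assume A: "\<And>i. i \<in> {..<L} \<Longrightarrow> A i \<in> sets (density lborel (normal_density (a i + \<delta> i) \<sigma>))"
    have Ab: "A i \<in> sets borel" if "i < L" for i using A[of i] that by auto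
    have PiE_in: "Pi\<^sub>E {..<L} A \<in> sets (gauss L \<sigma> a)"
      unfolding sets_gauss obs_space_def using Ab by (intro sets_PiM_I_finite) auto
    have "emeasure (density (gauss L \<sigma> a) (likelihood_ratio L \<sigma> a \<delta>)) (Pi\<^sub>E {..<L} A)
       = (\<integral>\<^sup>+ y. ennreal (likelihood_ratio L \<sigma> a \<delta> y) * indicator (Pi\<^sub>E {..<L} A) y \<partial>gauss L \<sigma> a)"
      by (rule emeasure_density[OF rm PiE_in])
    also have "\<dots> = (\<integral>\<^sup>+ y. (\<Prod>j<L. ennreal (lr_factor \<sigma> (a j) (\<delta> j) (y j)) * indicator (A j) (y j))
                      \<partial>gauss L \<sigma> a)"
      by (rule nn_integral_cong) (rule likelihood_ratio_indicator_box)
    also have "\<dots> = (\<Prod>j<L. \<integral>\<^sup>+ z. ennreal (lr_factor \<sigma> (a j) (\<delta> j) z) * indicator (A j) z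
                      \<partial>density lborel (normal_density (a j) \<sigma>))"
      unfolding gauss_def
    proof (rule P0.product_nn_integral_prod)
      fix j assume "j \<in> {..<L}"
      then have [measurable]: "A j \<in> sets borel" using Ab by auto
      show "(\<lambda>z. ennreal (lr_factor \<sigma> (a j) (\<delta> j) z) * indicator (A j) z)
          \<in> borel_measurable (density lborel (normal_density (a j) \<sigma>))"
        unfolding lr_factor_def by measurable
    qed simp
    also have "\<dots> = (\<Prod>j<L. emeasure (density lborel (normal_density (a j + \<delta> j) \<sigma>)) (A j))"
      using Ab by (intro prod.cong refl nn_integral_lr_factor[OF sp]) simp
    finally show "emeasure (density (gauss L \<sigma> a) (likelihood_ratio L \<sigma> a \<delta>)) (Pi\<^sub>E {..<L} A)
       = (\<Prod>j\<in>{..<L}. emeasure (density lborel (normal_density (a j + \<delta> j) \<sigma>)) (A j))" .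
  qed simp
qed

lemma integral_gauss_translate:
  assumes sp: "\<sigma> > 0" and [measurable]: "f \<in> borel_measurable (obs_space L)"
  shows "(\<integral>y. f y \<partial>gauss L \<sigma> (\<lambda>j. a j + \<delta> j))
       = (\<integral>y. likelihood_ratio L \<sigma> a \<delta> y * f y \<partial>gauss L \<sigma> a)"
  unfolding gauss_translate_density[OF sp]
  by (subst integral_density) (auto simp: measurable_gauss likelihood_ratio_nonneg)

lemma integrable_likelihood_ratio:
  assumes sp: "\<sigma> > 0"
  shows "integrable (gauss L \<sigma> a) (likelihood_ratio L \<sigma> a \<delta>)"
proof -
  interpret prob_space "gauss L \<sigma> (\<lambda>j. a j + \<delta> j)" by (rule prob_space_gauss[OF sp])
  have "integrable (density (gauss L \<sigma> a) (likelihood_ratio L \<sigma> a \<delta>)) (\<lambda>_. 1::real)"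
    using integrable_const[of "1::real"] by (simp add: gauss_translate_density[OF sp])
  then show ?thesis
    by (subst (asm) integrable_density) (auto simp: measurable_gauss likelihood_ratio_nonneg)
qed

text \<open>Along a direction \<open>u\<close> of mean shifts, the log-likelihood ratio is
  \<open>\<alpha> \<cdot> score - \<alpha>\<^sup>2 \<cdot> kl\<close>, where the score is the derivative of the log-likelihood
  and \<open>kl = \<parallel>u\<parallel>\<^sup>2 / (2\<sigma>\<^sup>2)\<close> is the Kullback-Leibler divergence of the unit shift.\<close>

definition score :: "nat \<Rightarrow> real \<Rightarrow> (nat \<Rightarrow> real) \<Rightarrow> (nat \<Rightarrow> real) \<Rightarrow> (nat \<Rightarrow> real) \<Rightarrow> real" where
  "score L \<sigma> a u y = (\<Sum>j<L. u j * (y j - a j)) / \<sigma>\<^sup>2"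

definition kl_gauss :: "nat \<Rightarrow> real \<Rightarrow> (nat \<Rightarrow> real) \<Rightarrow> real" where
  "kl_gauss L \<sigma> u = (\<Sum>j<L. (u j)\<^sup>2) / (2 * \<sigma>\<^sup>2)"

lemma kl_gauss_nonneg: "0 \<le> kl_gauss L \<sigma> u"
  unfolding kl_gauss_def by (intro divide_nonneg_nonneg sum_nonneg) auto

lemma score_measurable[measurable]: "score L \<sigma> a u \<in> borel_measurable (obs_space L)"
  unfolding score_def obs_space_def by measurable

lemma likelihood_ratio_direction:
  "likelihood_ratio L \<sigma> a (\<lambda>j. \<alpha> * u j) y = exp (\<alpha> * score L \<sigma> a u y - \<alpha>\<^sup>2 * kl_gauss L \<sigma> u)"
proof -
  have "(\<Sum>j<L. \<alpha> * u j * (y j - a j) / \<sigma>\<^sup>2 - (\<alpha> * u j)\<^sup>2 / (2 * \<sigma>\<^sup>2))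
      = \<alpha> * score L \<sigma> a u y - \<alpha>\<^sup>2 * kl_gauss L \<sigma> u"
    unfolding score_def kl_gauss_def sum_subtractf
    by (simp add: sum_divide_distrib sum_distrib_left power_mult_distrib mult.assoc)
  then show ?thesis unfolding likelihood_ratio_def lr_factor_def by (simp add: exp_sum[symmetric])
qed

lemma integrable_exp_score:
  assumes sp: "\<sigma> > 0"
  shows "integrable (gauss L \<sigma> a) (\<lambda>y. exp (\<beta> * score L \<sigma> a u y))"
proof -
  have "exp (\<beta> * score L \<sigma> a u y)
      = exp (\<beta>\<^sup>2 * kl_gauss L \<sigma> u) * likelihood_ratio L \<sigma> a (\<lambda>j. \<beta> * u j) y" for y
    unfolding likelihood_ratio_direction by (simp add: mult_exp_exp)
  then show ?thesis
    using integrable_mult_right[OF integrable_likelihood_ratio[OF sp]] by presburger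
qed

section \<open>Differentiating Gaussian expectations with respect to the mean\<close>

lemma exp_taylor_remainder: "\<bar>exp z - 1 - z\<bar> \<le> z\<^sup>2 * exp \<bar>z\<bar>" for z :: real
proof -
  obtain t where t: "\<bar>t\<bar> \<le> \<bar>z\<bar>" "exp z = (\<Sum>m<2. z ^ m / fact m) + exp t / fact 2 * z ^ 2"
    using Maclaurin_exp_le[of z 2] by blast
  have "exp z - 1 - z = exp t / 2 * z\<^sup>2" using t(2) by (simp add: numeral_2_eq_2)
  then have "\<bar>exp z - 1 - z\<bar> = \<bar>exp t / 2 * z\<^sup>2\<bar>" by (simp only:)
  also have "\<dots> = exp t / 2 * z\<^sup>2" by simp
  also have "\<dots> \<le> exp \<bar>z\<bar> * z\<^sup>2"
  proof (intro mult_right_mono)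
    have "exp t \<le> exp \<bar>z\<bar>" using t(1) abs_ge_self[of t] by simp
    then show "exp t / 2 \<le> exp \<bar>z\<bar>" using exp_gt_zero[of t] by linarith
  qed simp
  finally show ?thesis by (simp only: mult.commute)
qed

lemma sq_le_exp: "0 \<le> y \<Longrightarrow> y\<^sup>2 \<le> 2 * exp y" for y :: real
proof -
  assume y: "0 \<le> y"
  obtain t where t: "exp y = (\<Sum>m<3. y ^ m / fact m) + exp t / fact 3 * y ^ 3"
    using Maclaurin_exp_le[of y 3] by blast
  then have "exp y = 1 + y + y\<^sup>2 / 2 + exp t / 6 * y ^ 3" by (simp add: eval_nat_numeral)
  moreover have "0 \<le> exp t / 6 * y ^ 3" using y by simp
  ultimately show ?thesis using y by simp
qed

lemma exp_abs_le: "exp \<bar>x\<bar> \<le> exp x + exp (- x)" for x :: real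
  using exp_gt_zero[of x] exp_gt_zero[of "-x"] by (cases "0 \<le> x") auto

lemma abs_le_exp_sum: "\<bar>x\<bar> \<le> exp x + exp (- x)" for x :: real
  using exp_ge_add_one_self[of "\<bar>x\<bar>"] exp_abs_le[of x] by linarith

text \<open>The second-order remainder of the likelihood ratio \<open>exp (\<alpha> T - \<alpha>\<^sup>2 C)\<close> around \<open>\<alpha> = 0\<close>
  is \<open>O(\<alpha>\<^sup>2)\<close>, uniformly up to a factor that is integrable whenever \<open>T\<close> has exponential
  moments.\<close>

lemma exp_quadratic_remainder:
  fixes \<alpha> T C :: real
  assumes a: "\<bar>\<alpha>\<bar> \<le> 1" and C: "0 \<le> C"
  shows "\<bar>exp (\<alpha> * T - \<alpha>\<^sup>2 * C) - 1 - \<alpha> * T\<bar>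
      \<le> \<alpha>\<^sup>2 * (2 * exp (2 * C) + C) * (exp (2 * T) + exp (- (2 * T)))"
proof -
  define z where "z = \<alpha> * T - \<alpha>\<^sup>2 * C"
  define E where "E = exp (2 * T) + exp (- (2 * T))"
  have "\<alpha>\<^sup>2 = \<bar>\<alpha>\<bar> * \<bar>\<alpha>\<bar>" by (simp add: power2_eq_square)
  also have "\<dots> \<le> \<bar>\<alpha>\<bar> * 1" using a by (intro mult_left_mono) auto
  finally have a2: "\<alpha>\<^sup>2 \<le> \<bar>\<alpha>\<bar>" by simp
  have "\<bar>z\<bar> \<le> \<bar>\<alpha>\<bar> * \<bar>T\<bar> + \<alpha>\<^sup>2 * C"
    unfolding z_def using abs_triangle_ineq4[of "\<alpha> * T" "\<alpha>\<^sup>2 * C"] C by (simp add: abs_mult)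
  also have "\<dots> \<le> \<bar>\<alpha>\<bar> * (\<bar>T\<bar> + C)"
    using mult_right_mono[OF a2 C] by (simp add: algebra_simps)
  finally have zb: "\<bar>z\<bar> \<le> \<bar>\<alpha>\<bar> * (\<bar>T\<bar> + C)" .
  have TC: "0 \<le> \<bar>T\<bar> + C" using C by simp
  have zb2: "\<bar>z\<bar> \<le> \<bar>T\<bar> + C" using zb mult_right_mono[OF a TC] by simp
  have zsq: "z\<^sup>2 \<le> \<alpha>\<^sup>2 * (\<bar>T\<bar> + C)\<^sup>2"
    using power_mono[OF zb, of 2] by (simp add: power_mult_distrib)
  have E2: "exp (2 * \<bar>T\<bar>) \<le> E"
    unfolding E_def using exp_abs_le[of "2 * T"] by (simp add: abs_mult)
  moreover have "1 \<le> exp (2 * \<bar>T\<bar>)" by simp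
  ultimately have E1: "1 \<le> E" by linarith
  have ee: "exp (\<bar>T\<bar> + C) * exp (\<bar>T\<bar> + C) = exp (2 * C) * exp (2 * \<bar>T\<bar>)"
    by (simp only: mult_exp_exp) (rule arg_cong[where f = exp], simp)
  have taylor: "\<bar>exp z - 1 - z\<bar> \<le> \<alpha>\<^sup>2 * (2 * exp (2 * C) * E)"
  proof -
    have "\<bar>exp z - 1 - z\<bar> \<le> z\<^sup>2 * exp \<bar>z\<bar>" by (rule exp_taylor_remainder)
    also have "\<dots> \<le> (\<alpha>\<^sup>2 * (\<bar>T\<bar> + C)\<^sup>2) * exp (\<bar>T\<bar> + C)"
      using zsq zb2 by (intro mult_mono) auto
    also have "\<dots> \<le> (\<alpha>\<^sup>2 * (2 * exp (\<bar>T\<bar> + C))) * exp (\<bar>T\<bar> + C)"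
      using sq_le_exp[OF TC] by (intro mult_right_mono mult_left_mono) auto
    also have "\<dots> = \<alpha>\<^sup>2 * (2 * (exp (2 * C) * exp (2 * \<bar>T\<bar>)))"
      by (simp only: mult.assoc ee)
    also have "\<dots> \<le> \<alpha>\<^sup>2 * (2 * exp (2 * C) * E)"
      using E2 by (intro mult_left_mono) auto
    finally show ?thesis .
  qed
  have "\<bar>exp z - 1 - \<alpha> * T\<bar> \<le> \<bar>exp z - 1 - z\<bar> + \<alpha>\<^sup>2 * C"
    unfolding z_def using abs_triangle_ineq4[of "exp z - 1 - z" "\<alpha>\<^sup>2 * C"] C by (simp add: z_def)
  also have "\<dots> \<le> \<alpha>\<^sup>2 * (2 * exp (2 * C) * E) + \<alpha>\<^sup>2 * (C * E)"
    using taylor mult_left_mono[OF mult_left_mono[OF E1 C], of "\<alpha>\<^sup>2"] by simp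
  finally show ?thesis unfolding z_def E_def by (simp add: algebra_simps)
qed

lemma integrable_mult_of_squares:
  fixes f g :: "'a \<Rightarrow> real"
  assumes "integrable M (\<lambda>y. (f y)\<^sup>2)" "integrable M (\<lambda>y. (g y)\<^sup>2)"
    "f \<in> borel_measurable M" "g \<in> borel_measurable M"
  shows "integrable M (\<lambda>y. f y * g y)"
proof (rule Bochner_Integration.integrable_bound[where f = "\<lambda>y. (f y)\<^sup>2 + (g y)\<^sup>2"])
  show "integrable M (\<lambda>y. (f y)\<^sup>2 + (g y)\<^sup>2)" by (intro Bochner_Integration.integrable_add assms)
  have "\<bar>f y * g y\<bar> \<le> (f y)\<^sup>2 + (g y)\<^sup>2" for y
  proof -
    have "2 * (\<bar>f y\<bar> * \<bar>g y\<bar>) \<le> (f y)\<^sup>2 + (g y)\<^sup>2"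
      using sum_squares_bound[of "\<bar>f y\<bar>" "\<bar>g y\<bar>"] by (simp add: mult.assoc)
    moreover have "0 \<le> \<bar>f y\<bar> * \<bar>g y\<bar>" by simp
    ultimately show ?thesis unfolding abs_mult by linarith
  qed
  then show "AE y in M. norm (f y * g y) \<le> norm ((f y)\<^sup>2 + (g y)\<^sup>2)" by simp
qed (use assms in measurable)

lemma integrable_mult_exp_score:
  assumes sp: "\<sigma> > 0" and [measurable]: "f \<in> borel_measurable (obs_space L)"
    and f2: "integrable (gauss L \<sigma> a) (\<lambda>y. (f y)\<^sup>2)"
  shows "integrable (gauss L \<sigma> a) (\<lambda>y. f y * exp (\<beta> * score L \<sigma> a u y))"
proof (rule integrable_mult_of_squares[OF f2])
  have "(exp (\<beta> * score L \<sigma> a u y))\<^sup>2 = exp ((2 * \<beta>) * score L \<sigma> a u y)" for y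
    using exp_of_nat_mult[of 2 "\<beta> * score L \<sigma> a u y"] by (simp add: mult.assoc)
  then show "integrable (gauss L \<sigma> a) (\<lambda>y. (exp (\<beta> * score L \<sigma> a u y))\<^sup>2)"
    using integrable_exp_score[OF sp] by presburger
qed (simp_all add: measurable_gauss)

text \<open>In particular \<open>f \<cdot> score\<close> is integrable, as \<open>\<bar>t\<bar> \<le> e\<^sup>t + e\<^sup>-\<^sup>t\<close>.\<close>

lemma integrable_mult_score:
  assumes sp: "\<sigma> > 0" and fm[measurable]: "f \<in> borel_measurable (obs_space L)"
    and f2: "integrable (gauss L \<sigma> a) (\<lambda>y. (f y)\<^sup>2)"
  shows "integrable (gauss L \<sigma> a) (\<lambda>y. f y * score L \<sigma> a u y)"
proof (rule Bochner_Integration.integrable_bound)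
  define T where "T = score L \<sigma> a u"
  define B where "B y = \<bar>f y * exp (1 * T y)\<bar> + \<bar>f y * exp ((- 1) * T y)\<bar>" for y
  show "integrable (gauss L \<sigma> a) B"
    unfolding B_def T_def by (intro Bochner_Integration.integrable_add integrable_abs integrable_mult_exp_score[OF sp fm f2])
  have "\<bar>f y\<bar> * \<bar>T y\<bar> \<le> \<bar>f y\<bar> * (exp (T y) + exp (- T y))" for y
    by (intro mult_left_mono abs_le_exp_sum) simp
  then show "AE y in gauss L \<sigma> a. norm (f y * score L \<sigma> a u y) \<le> norm (B y)"
    by (simp add: B_def T_def abs_mult distrib_left)
qed (simp add: measurable_gauss)

lemma DERIV_from_quadratic_remainder:
  fixes G :: "real \<Rightarrow> real"
  assumes b: "\<And>\<alpha>. \<bar>\<alpha>\<bar> \<le> 1 \<Longrightarrow> \<bar>G \<alpha> - G 0 - \<alpha> * D\<bar> \<le> K * \<alpha>\<^sup>2"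
  shows "(G has_real_derivative D) (at 0)"
proof -
  have "((\<lambda>h. (G h - G 0) / h - D) \<longlongrightarrow> 0) (at 0)"
  proof (rule Lim_null_comparison)
    show "\<forall>\<^sub>F h in at 0. norm ((G h - G 0) / h - D) \<le> \<bar>K\<bar> * \<bar>h\<bar>"
      unfolding eventually_at
    proof (intro exI[of _ 1] conjI ballI impI)
      fix h :: real assume "h \<in> UNIV" and h: "h \<noteq> 0 \<and> dist h 0 < 1"
      then have h0: "h \<noteq> 0" and h1: "\<bar>h\<bar> \<le> 1" by auto
      have "norm ((G h - G 0) / h - D) = \<bar>G h - G 0 - h * D\<bar> / \<bar>h\<bar>"
        using h0 by (simp add: field_simps)
      also have "\<dots> \<le> K * h\<^sup>2 / \<bar>h\<bar>" by (rule divide_right_mono[OF b[OF h1]]) simp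
      also have "h\<^sup>2 = \<bar>h\<bar> * \<bar>h\<bar>" by (simp add: power2_eq_square)
      also have "K * (\<bar>h\<bar> * \<bar>h\<bar>) / \<bar>h\<bar> = K * \<bar>h\<bar>"
        using h0 by (simp only: mult.assoc[symmetric]) (rule nonzero_mult_div_cancel_right, simp)
      also have "\<dots> \<le> \<bar>K\<bar> * \<bar>h\<bar>" by (intro mult_right_mono) auto
      finally show "norm ((G h - G 0) / h - D) \<le> \<bar>K\<bar> * \<bar>h\<bar>" .
    qed simp
    show "((\<lambda>h. \<bar>K\<bar> * \<bar>h\<bar>) \<longlongrightarrow> 0) (at (0::real))"
      using tendsto_mult_right_zero[OF tendsto_rabs_zero[OF tendsto_ident_at]] by simp
  qed
  then have "((\<lambda>h. (G h - G 0) / h) \<longlongrightarrow> D) (at 0)" by (rule LIM_zero_cancel)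
  then show ?thesis by (simp add: has_field_derivative_iff)
qed

lemma DERIV_gauss_expectation:
  assumes sp: "\<sigma> > 0" and fm[measurable]: "f \<in> borel_measurable (obs_space L)"
    and f2: "integrable (gauss L \<sigma> a) (\<lambda>y. (f y)\<^sup>2)"
  shows "((\<lambda>\<alpha>. \<integral>y. f y \<partial>gauss L \<sigma> (\<lambda>j. a j + \<alpha> * u j)) has_real_derivative
            (\<integral>y. f y * score L \<sigma> a u y \<partial>gauss L \<sigma> a)) (at 0)"
proof -
  define P where "P = gauss L \<sigma> a"
  define T where "T = score L \<sigma> a u"
  define C where "C = kl_gauss L \<sigma> u"
  define K where "K = 2 * exp (2 * C) + C"
  define H where "H y = \<bar>f y * exp (2 * T y)\<bar> + \<bar>f y * exp ((- 2) * T y)\<bar>" for y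
  have C0: "0 \<le> C" unfolding C_def by (rule kl_gauss_nonneg)
  have [measurable]: "T \<in> borel_measurable P" "f \<in> borel_measurable P"
    unfolding T_def P_def measurable_gauss by simp_all
  have fE: "integrable P (\<lambda>y. f y * exp (\<beta> * T y))" for \<beta>
    unfolding P_def T_def by (rule integrable_mult_exp_score[OF sp fm f2])
  have iF: "integrable P f" using fE[of 0] by simp
  have iFE: "integrable P (\<lambda>y. exp (\<alpha> * T y - \<alpha>\<^sup>2 * C) * f y)" for \<alpha>
  proof -
    have "exp (\<alpha> * T y - \<alpha>\<^sup>2 * C) * f y = exp (- (\<alpha>\<^sup>2 * C)) * (f y * exp (\<alpha> * T y))" for y
      by (simp add: mult_exp_exp)
    then show ?thesis using integrable_mult_right[OF fE] by presburger
  qed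
  have iH: "integrable P H" unfolding H_def by (intro Bochner_Integration.integrable_add integrable_abs fE)
  have iFT: "integrable P (\<lambda>y. f y * T y)"
    unfolding P_def T_def by (rule integrable_mult_score[OF sp fm f2])
  define G where "G \<alpha> = (\<integral>y. f y \<partial>gauss L \<sigma> (\<lambda>j. a j + \<alpha> * u j))" for \<alpha>
  define D where "D = (\<integral>y. f y * T y \<partial>P)"
  have G: "G \<alpha> = (\<integral>y. exp (\<alpha> * T y - \<alpha>\<^sup>2 * C) * f y \<partial>P)" for \<alpha>
    using integral_gauss_translate[OF sp fm, of a "\<lambda>j. \<alpha> * u j"]
    unfolding G_def P_def T_def C_def likelihood_ratio_direction .
  have "(G has_real_derivative D) (at 0)"
  proof (rule DERIV_from_quadratic_remainder)
    fix \<alpha> :: real assume a1: "\<bar>\<alpha>\<bar> \<le> 1"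
    define R where "R y = (exp (\<alpha> * T y - \<alpha>\<^sup>2 * C) - 1 - \<alpha> * T y) * f y" for y
    have iR: "integrable P R"
      unfolding R_def using iFE iF iFT by (simp add: algebra_simps)
    have "G \<alpha> - G 0 - \<alpha> * D = (\<integral>y. R y \<partial>P)"
      unfolding G D_def R_def using iFE iF iFT by (simp add: algebra_simps)
    also have "\<bar>\<dots>\<bar> \<le> (\<integral>y. \<bar>R y\<bar> \<partial>P)"
      using integral_norm_bound[of P R] by simp
    also have "\<dots> \<le> (\<integral>y. \<alpha>\<^sup>2 * K * H y \<partial>P)"
    proof (rule integral_mono)
      show "integrable P (\<lambda>y. \<bar>R y\<bar>)" using iR by simp
      show "integrable P (\<lambda>y. \<alpha>\<^sup>2 * K * H y)" using iH by simp
      fix y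
      have "\<bar>R y\<bar> = \<bar>exp (\<alpha> * T y - \<alpha>\<^sup>2 * C) - 1 - \<alpha> * T y\<bar> * \<bar>f y\<bar>"
        unfolding R_def by (rule abs_mult)
      also have "\<dots> \<le> \<alpha>\<^sup>2 * K * (exp (2 * T y) + exp (- (2 * T y))) * \<bar>f y\<bar>"
        unfolding K_def by (intro mult_right_mono exp_quadratic_remainder a1 C0) simp
      also have "\<dots> = \<alpha>\<^sup>2 * K * H y"
        by (simp add: H_def abs_mult algebra_simps)
      finally show "\<bar>R y\<bar> \<le> \<alpha>\<^sup>2 * K * H y" .
    qed
    also have "\<dots> = (\<integral>y. K * H y \<partial>P) * \<alpha>\<^sup>2" by (simp add: mult.commute mult.left_commute)
    finally show "\<bar>G \<alpha> - G 0 - \<alpha> * D\<bar> \<le> (\<integral>y. K * H y \<partial>P) * \<alpha>\<^sup>2" .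
  qed
  then show ?thesis unfolding G_def D_def T_def P_def .
qed

section \<open>First and second moments of the Gaussian law\<close>

text \<open>The moments are obtained from the score identity itself: differentiating the constant
  \<open>E[1] = 1\<close> gives a zero mean, differentiating the mean gives the covariance.\<close>

definition basis :: "nat \<Rightarrow> nat \<Rightarrow> real" where
  "basis l = (\<lambda>i. if i = l then 1 else 0)"

lemma basis_sym: "basis l i = basis i l"
  by (simp add: basis_def)

lemma sum_basis: "(\<Sum>k<n. g k * basis l k) = (if l < n then g l else 0)"
proof -
  have "(\<Sum>k<n. g k * basis l k) = (\<Sum>k<n. if k = l then g k else 0)"
    by (intro sum.cong) (auto simp: basis_def)
  then show ?thesis by simp
qed

lemma score_basis: "k < L \<Longrightarrow> score L \<sigma> a (basis k) y = (y k - a k) / \<sigma>\<^sup>2"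
  using sum_basis[where g = "\<lambda>j. y j - a j" and n = L and l = k] by (simp add: score_def mult.commute)

lemma centered_measurable[measurable]: "k < L \<Longrightarrow> (\<lambda>y. y k - a k) \<in> borel_measurable (obs_space L)"
  unfolding obs_space_def by measurable

text \<open>The noise coordinates are square-integrable, being dominated by exponentials of the score.\<close>

lemma integrable_centered_sq:
  assumes sp: "\<sigma> > 0" and k: "k < L"
  shows "integrable (gauss L \<sigma> a) (\<lambda>y. (y k - a k)\<^sup>2)"
proof (rule Bochner_Integration.integrable_bound)
  define T where "T = score L \<sigma> a (basis k)"
  show "integrable (gauss L \<sigma> a) (\<lambda>y. 2 * exp (\<sigma>\<^sup>2 * T y) + 2 * exp ((- \<sigma>\<^sup>2) * T y))"
    unfolding T_def by (intro Bochner_Integration.integrable_add integrable_mult_right integrable_exp_score[OF sp])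
  have "(y k - a k)\<^sup>2 \<le> 2 * exp (\<sigma>\<^sup>2 * T y) + 2 * exp ((- \<sigma>\<^sup>2) * T y)" for y
  proof -
    have "(y k - a k)\<^sup>2 = \<bar>y k - a k\<bar>\<^sup>2" by simp
    also have "\<dots> \<le> 2 * exp \<bar>y k - a k\<bar>" by (rule sq_le_exp) simp
    also have "\<dots> \<le> 2 * (exp (y k - a k) + exp (- (y k - a k)))"
      using exp_abs_le[of "y k - a k"] by simp
    finally show ?thesis using sp by (simp add: T_def score_basis[OF k])
  qed
  then show "AE y in gauss L \<sigma> a. norm ((y k - a k)\<^sup>2) \<le> norm (2 * exp (\<sigma>\<^sup>2 * T y) + 2 * exp ((- \<sigma>\<^sup>2) * T y))"
    by (intro AE_I2) (simp add: add_nonneg_nonneg)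
qed (simp add: measurable_gauss k)

lemma integrable_centered:
  assumes sp: "\<sigma> > 0" and k: "k < L"
  shows "integrable (gauss L \<sigma> a) (\<lambda>y. y k - a k)"
proof -
  interpret P: prob_space "gauss L \<sigma> a" by (rule prob_space_gauss[OF sp])
  have "integrable (gauss L \<sigma> a) (\<lambda>y. (y k - a k) * 1)"
    using integrable_centered_sq[OF sp k] by (rule integrable_mult_of_squares) (simp_all add: measurable_gauss k)
  then show ?thesis by simp
qed

lemma centered_mean:
  assumes sp: "\<sigma> > 0" and k: "k < L"
  shows "(\<integral>y. y k - a k \<partial>gauss L \<sigma> a) = 0"
proof -
  have d: "((\<lambda>\<alpha>. \<integral>y. 1 \<partial>gauss L \<sigma> (\<lambda>j. a j + \<alpha> * basis k j)) has_real_derivative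
            (\<integral>y. 1 * score L \<sigma> a (basis k) y \<partial>gauss L \<sigma> a)) (at 0)"
  proof (rule DERIV_gauss_expectation[OF sp])
    interpret P: prob_space "gauss L \<sigma> a" by (rule prob_space_gauss[OF sp])
    show "integrable (gauss L \<sigma> a) (\<lambda>y. 1\<^sup>2)" by simp
  qed simp
  have c: "(\<lambda>\<alpha>. \<integral>y. 1 \<partial>gauss L \<sigma> (\<lambda>j. a j + \<alpha> * basis k j)) = (\<lambda>_. (1::real))"
    by (rule ext) (simp add: prob_space.prob_space[OF prob_space_gauss[OF sp]])
  have "(\<integral>y. 1 * score L \<sigma> a (basis k) y \<partial>gauss L \<sigma> a) = 0"
    using d unfolding c using DERIV_const DERIV_unique by blast
  then have "(\<integral>y. (y k - a k) / \<sigma>\<^sup>2 \<partial>gauss L \<sigma> a) = 0" by (simp add: score_basis[OF k])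
  then show ?thesis using sp by simp
qed

lemma centered_mean_translate:
  assumes sp: "\<sigma> > 0" and k: "k < L"
  shows "(\<integral>y. y k - a k \<partial>gauss L \<sigma> b) = b k - a k"
proof -
  interpret P: prob_space "gauss L \<sigma> b" by (rule prob_space_gauss[OF sp])
  have "(\<integral>y. y k - a k \<partial>gauss L \<sigma> b) = (\<integral>y. (y k - b k) + (b k - a k) \<partial>gauss L \<sigma> b)" by simp
  also have "\<dots> = (\<integral>y. y k - b k \<partial>gauss L \<sigma> b) + (\<integral>y. b k - a k \<partial>gauss L \<sigma> b)"
    using integrable_centered[OF sp k] by (intro Bochner_Integration.integral_add) auto
  also have "\<dots> = b k - a k"
    using centered_mean[OF sp k] by (simp add: P.prob_space)
  finally show ?thesis .
qed

lemma centered_covariance: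
  assumes sp: "\<sigma> > 0" and k: "k < L" and j: "j < L"
  shows "(\<integral>y. (y k - a k) * (y j - a j) \<partial>gauss L \<sigma> a) = \<sigma>\<^sup>2 * basis j k"
proof -
  have "((\<lambda>\<alpha>. \<integral>y. y k - a k \<partial>gauss L \<sigma> (\<lambda>i. a i + \<alpha> * basis j i)) has_real_derivative
            (\<integral>y. (y k - a k) * score L \<sigma> a (basis j) y \<partial>gauss L \<sigma> a)) (at 0)"
    by (rule DERIV_gauss_expectation[OF sp centered_measurable[OF k] integrable_centered_sq[OF sp k]])
  moreover have "(\<lambda>\<alpha>. \<integral>y. y k - a k \<partial>gauss L \<sigma> (\<lambda>i. a i + \<alpha> * basis j i)) = (\<lambda>\<alpha>. \<alpha> * basis j k)"
    by (rule ext) (simp add: centered_mean_translate[OF sp k])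
  moreover have "((\<lambda>\<alpha>. \<alpha> * basis j k) has_real_derivative basis j k) (at 0)"
    using DERIV_cmult_right[OF DERIV_ident, of "basis j k"] by simp
  ultimately have "(\<integral>y. (y k - a k) * score L \<sigma> a (basis j) y \<partial>gauss L \<sigma> a) = basis j k"
    using DERIV_unique by force
  then show ?thesis using sp by (simp add: score_basis[OF j] field_simps)
qed

section \<open>Consequences of \<open>\<X>\<close>-unbiasedness\<close>

lemma matvec_translate:
  "j < L \<Longrightarrow> matvec L N D (\<lambda>i. x i + \<alpha> * v i) j = matvec L N D x j + \<alpha> * matvec L N D v j"
  unfolding matvec_def by (simp add: distrib_left sum.distrib sum_distrib_left algebra_simps)

lemma matvec_basis: "j < L \<Longrightarrow> l < N \<Longrightarrow> matvec L N D (basis l) j = D j l"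
  using sum_basis[where g = "D j" and n = N and l = l] by (simp add: matvec_def)

lemma obs_translate:
  "\<sigma> > 0 \<Longrightarrow> obs L N D \<sigma> (\<lambda>i. x i + \<alpha> * v i)
      = gauss L \<sigma> (\<lambda>j. matvec L N D x j + \<alpha> * matvec L N D v j)"
  unfolding obs_eq_gauss by (rule gauss_cong) (rule matvec_translate)

definition cross_moment :: "nat \<Rightarrow> nat \<Rightarrow> (nat \<Rightarrow> nat \<Rightarrow> real) \<Rightarrow> real \<Rightarrow>
    ((nat \<Rightarrow> real) \<Rightarrow> (nat \<Rightarrow> real)) \<Rightarrow> (nat \<Rightarrow> real) \<Rightarrow> nat \<Rightarrow> nat \<Rightarrow> real" where
  "cross_moment L N D \<sigma> xh x m j = (\<integral>y. xh y m * (y j - matvec L N D x j) \<partial>obs L N D \<sigma> x)"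

lemma estimator_measurable:
  "estimator L N xh \<Longrightarrow> m < N \<Longrightarrow> (\<lambda>y. xh y m) \<in> borel_measurable (gauss L \<sigma> a)"
  unfolding estimator_def measurable_gauss by auto

lemma integrable_estimator_sq:
  "\<sigma> > 0 \<Longrightarrow> finite_var L N D \<sigma> xh x \<Longrightarrow> m < N
    \<Longrightarrow> integrable (gauss L \<sigma> (matvec L N D x)) (\<lambda>y. (xh y m)\<^sup>2)"
  unfolding finite_var_def obs_eq_gauss by auto

lemma integrable_estimator_noise:
  assumes sp: "\<sigma> > 0" and est: "estimator L N xh" and fv: "finite_var L N D \<sigma> xh x"
    and m: "m < N" and j: "j < L"
  shows "integrable (gauss L \<sigma> (matvec L N D x)) (\<lambda>y. xh y m * (y j - matvec L N D x j))"
  by (rule integrable_mult_of_squares[OF integrable_estimator_sq[OF sp fv m] integrable_centered_sq[OF sp j]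
        estimator_measurable[OF est m]]) (simp add: measurable_gauss j)

text \<open>If the bias of coordinate \<open>m\<close> is stationary in the direction \<open>v\<close>, the score identity
  turns the derivative of \<open>E[xh\<^sub>m]\<close> into a correlation with the score in direction \<open>D v\<close>.\<close>

lemma stationary_bias_score:
  assumes sp: "\<sigma> > 0" and est: "estimator L N xh" and fv: "finite_var L N D \<sigma> xh x" and m: "m < N"
    and dv: "((\<lambda>\<alpha>. bias L N D \<sigma> xh (\<lambda>i. x i + \<alpha> * v i) m) has_real_derivative 0) (at 0)"
  shows "(\<integral>y. xh y m * score L \<sigma> (matvec L N D x) (matvec L N D v) y \<partial>gauss L \<sigma> (matvec L N D x)) = v m"
proof -
  define a where "a = matvec L N D x"
  define u where "u = matvec L N D v"
  have fm: "(\<lambda>y. xh y m) \<in> borel_measurable (obs_space L)" using est m unfolding estimator_def by auto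
  have "((\<lambda>\<alpha>. \<integral>y. xh y m \<partial>gauss L \<sigma> (\<lambda>j. a j + \<alpha> * u j)) has_real_derivative
            (\<integral>y. xh y m * score L \<sigma> a u y \<partial>gauss L \<sigma> a)) (at 0)"
    unfolding a_def by (rule DERIV_gauss_expectation[OF sp fm integrable_estimator_sq[OF sp fv m]])
  moreover have "((\<lambda>\<alpha>. x m + \<alpha> * v m) has_real_derivative v m) (at 0)"
    by (auto intro!: derivative_eq_intros)
  ultimately have "((\<lambda>\<alpha>. bias L N D \<sigma> xh (\<lambda>i. x i + \<alpha> * v i) m) has_real_derivative
          (\<integral>y. xh y m * score L \<sigma> a u y \<partial>gauss L \<sigma> a) - v m) (at 0)"
    unfolding bias_def obs_translate[OF sp] a_def u_def by (rule DERIV_diff)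
  then show ?thesis using dv DERIV_unique unfolding a_def u_def by fastforce
qed

lemma stationary_bias_cross_moment:
  assumes sp: "\<sigma> > 0" and est: "estimator L N xh" and fv: "finite_var L N D \<sigma> xh x"
    and l: "l < N" and m: "m < N"
    and dv: "((\<lambda>\<alpha>. bias L N D \<sigma> xh (\<lambda>i. x i + \<alpha> * basis l i) m) has_real_derivative 0) (at 0)"
  shows "(\<Sum>j<L. D j l * cross_moment L N D \<sigma> xh x m j) = \<sigma>\<^sup>2 * basis l m"
proof -
  define a where "a = matvec L N D x"
  define P where "P = gauss L \<sigma> a"
  have integrable: "integrable P (\<lambda>y. xh y m * (y j - a j))" if "j < L" for j
    unfolding P_def a_def by (rule integrable_estimator_noise[OF sp est fv m that])
  have "basis l m = (\<integral>y. xh y m * score L \<sigma> a (matvec L N D (basis l)) y \<partial>P)"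
    using stationary_bias_score[OF sp est fv m dv] unfolding P_def a_def by simp
  also have "\<dots> = (\<integral>y. (\<Sum>j<L. D j l * (xh y m * (y j - a j))) / \<sigma>\<^sup>2 \<partial>P)"
    by (intro Bochner_Integration.integral_cong refl)
       (simp add: score_def matvec_basis l sum_distrib_left algebra_simps)
  also have "\<dots> = (\<Sum>j<L. D j l * cross_moment L N D \<sigma> xh x m j) / \<sigma>\<^sup>2"
    using integrable unfolding cross_moment_def obs_eq_gauss[OF sp] P_def a_def
    by (simp add: Bochner_Integration.integral_sum integrable_mult_right)
  finally show ?thesis using sp by (simp add: field_simps)
qed

lemma finite_bsupp: "finite (bsupp M d v)"
  unfolding bsupp_def by (rule finite_subset[of _ "{..<M}"]) auto

lemma bsupp_translate_basis:
  assumes d: "d > 0"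
  shows "bsupp M d (\<lambda>i. x i + \<alpha> * basis l i) \<subseteq> insert (l div d) (bsupp M d x)"
proof
  fix i assume "i \<in> bsupp M d (\<lambda>i. x i + \<alpha> * basis l i)"
  then obtain j where ij: "i < M" "j < d" "x (i * d + j) + \<alpha> * basis l (i * d + j) \<noteq> 0"
    unfolding bsupp_def by auto
  show "i \<in> insert (l div d) (bsupp M d x)"
  proof (cases "i * d + j = l")
    case True
    then show ?thesis using ij(2) d by auto
  next
    case False
    then show ?thesis using ij unfolding bsupp_def basis_def by auto
  qed
qed

lemma feasible_dir_basis:
  assumes d: "d > 0" and x: "x \<in> Xset M d k" and l: "l < M * d"
    and room: "l div d \<in> bsupp M d x \<or> card (bsupp M d x) < k"
  shows "feasible_dir M d k x (basis l)"
  unfolding feasible_dir_def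
proof (intro conjI exI[of _ 1] allI impI)
  show "basis l \<in> vecs (M * d)" using l by (auto simp: vecs_def basis_def)
  fix \<alpha> :: real
  have xv: "x \<in> vecs (M * d)" and xc: "card (bsupp M d x) \<le> k" using x unfolding Xset_def by auto
  have "card (bsupp M d (\<lambda>i. x i + \<alpha> * basis l i)) \<le> card (insert (l div d) (bsupp M d x))"
    by (rule card_mono[OF _ bsupp_translate_basis[OF d]]) (simp add: finite_bsupp)
  also have "\<dots> \<le> k"
    using room xc by (auto simp: card_insert_if finite_bsupp)
  finally show "(\<lambda>i. x i + \<alpha> * basis l i) \<in> Xset M d k"
    using xv l unfolding Xset_def by (auto simp: vecs_def basis_def)
qed simp

lemma unbiased_cross_moment:
  assumes d: "d > 0" and sp: "\<sigma> > 0" and x: "x \<in> Xset M d k"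
    and est: "estimator L (M * d) xh" and fv: "finite_var L (M * d) D \<sigma> xh x"
    and U: "X_unbiased L M d k D \<sigma> xh x"
    and l: "l < M * d" and m: "m < M * d"
    and room: "l div d \<in> bsupp M d x \<or> card (bsupp M d x) < k"
  shows "(\<Sum>j<L. D j l * cross_moment L (M * d) D \<sigma> xh x m j) = \<sigma>\<^sup>2 * basis l m"
proof (rule stationary_bias_cross_moment[OF sp est fv l m])
  show "((\<lambda>\<alpha>. bias L (M * d) D \<sigma> xh (\<lambda>i. x i + \<alpha> * basis l i) m) has_real_derivative 0) (at 0)"
    using U feasible_dir_basis[OF d x l room] m unfolding X_unbiased_def by blast
qed

section \<open>Linear algebra\<close>

lemma gram_entry:
  assumes "Ds \<in> carrier_mat L p" "a < p" "b < p"
  shows "(transpose_mat Ds * Ds) $$ (a, b) = (\<Sum>j<L. Ds $$ (j, a) * Ds $$ (j, b))"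
  using assms by (simp add: scalar_prod_def atLeast0LessThan)

text \<open>The Gram matrix of a matrix with full column rank is nonsingular:
  \<open>D\<^sup>T D c = 0\<close> forces \<open>\<parallel>D c\<parallel>\<^sup>2 = c\<^sup>T D\<^sup>T D c = 0\<close>, hence \<open>c = 0\<close>.\<close>

lemma gram_det_nonzero:
  assumes Ds: "Ds \<in> carrier_mat L p" and fr: "full_col_rank Ds"
  shows "Determinant.det (transpose_mat Ds * Ds) \<noteq> 0"
proof
  define G where "G = transpose_mat Ds * Ds"
  have Gc: "G \<in> carrier_mat p p" unfolding G_def using Ds by auto
  assume "Determinant.det (transpose_mat Ds * Ds) = 0"
  then obtain c where c: "c \<in> carrier_vec p" "c \<noteq> 0\<^sub>v p" "G *\<^sub>v c = 0\<^sub>v p"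
    using det_0_iff_vec_prod_zero[OF Gc] unfolding G_def by blast
  define w where "w j = (\<Sum>a<p. Ds $$ (j, a) * c $ a)" for j
  have Gc0: "(\<Sum>b<p. G $$ (a, b) * c $ b) = 0" if "a < p" for a
  proof -
    have "(G *\<^sub>v c) $ a = 0" using c(3) that by simp
    then show ?thesis using that Gc c(1) by (simp add: scalar_prod_def atLeast0LessThan)
  qed
  have "(\<Sum>j<L. (w j)\<^sup>2) = (\<Sum>a<p. \<Sum>b<p. \<Sum>j<L. c $ a * (Ds $$ (j, a) * Ds $$ (j, b)) * c $ b)"
    unfolding w_def power2_eq_square sum_product
    by (simp add: sum.swap[of _ "{..<L}"] algebra_simps)
  also have "\<dots> = (\<Sum>a<p. c $ a * (\<Sum>b<p. G $$ (a, b) * c $ b))"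
    unfolding sum_distrib_left
    by (intro sum.cong refl) (simp add: G_def gram_entry[OF Ds] sum_distrib_left algebra_simps)
  also have "\<dots> = 0" by (simp add: Gc0)
  finally have "w j = 0" if "j < L" for j
    using that by (subst (asm) sum_nonneg_eq_0_iff) auto
  then have "Ds *\<^sub>v c = 0\<^sub>v L"
    using Ds c(1) by (intro eq_vecI) (auto simp: w_def scalar_prod_def atLeast0LessThan)
  then show False using fr Ds c(1,2) unfolding full_col_rank_def by auto
qed

lemma mat_inv_right_inverse:
  assumes G: "G \<in> carrier_mat p p" and det: "Determinant.det G \<noteq> 0"
  shows "mat_inv G \<in> carrier_mat p p" "G * mat_inv G = 1\<^sub>m p"
proof -
  from det_non_zero_imp_unit[OF G det, unfolded Units_def, of "()"]
  obtain B where B: "B \<in> carrier_mat p p" "B * G = 1\<^sub>m p" "G * B = 1\<^sub>m p"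
    by (auto simp: ring_mat_def)
  have "\<exists>B. inverts_mat G B \<and> inverts_mat B G"
    using B G by (intro exI[of _ B]) (auto simp: inverts_mat_def)
  then have "inverts_mat G (mat_inv G) \<and> inverts_mat (mat_inv G) G"
    unfolding mat_inv_def by (rule someI_ex)
  then have GGi: "G * mat_inv G = 1\<^sub>m p" and GiG: "mat_inv G * G = 1\<^sub>m (dim_row (mat_inv G))"
    using G by (auto simp: inverts_mat_def)
  have "dim_col (mat_inv G) = p" using arg_cong[OF GGi, of dim_col] by simp
  moreover have "dim_row (mat_inv G) = p" using arg_cong[OF GiG, of dim_col] G by simp
  ultimately show "mat_inv G \<in> carrier_mat p p" by auto
  show "G * mat_inv G = 1\<^sub>m p" by (rule GGi)
qed

text \<open>With \<open>r = D G\<^sup>-\<^sup>1 e\<^sub>i\<close>, where \<open>G = D\<^sup>T D\<close>: \<open>\<parallel>r\<parallel>\<^sup>2 = e\<^sub>i\<^sup>T G\<^sup>-\<^sup>1 G G\<^sup>-\<^sup>1 e\<^sub>i = (G\<^sup>-\<^sup>1)\<^sub>i\<^sub>i\<close>.\<close>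

lemma gram_inverse_column_norm:
  fixes Ds :: "real mat"
  assumes Ds: "Ds \<in> carrier_mat L p" and Gi: "Gi \<in> carrier_mat p p"
    and inv: "(transpose_mat Ds * Ds) * Gi = 1\<^sub>m p" and i: "i < p"
  shows "(\<Sum>j<L. (\<Sum>b<p. Gi $$ (b, i) * Ds $$ (j, b))\<^sup>2) = Gi $$ (i, i)"
proof -
  define G where "G = transpose_mat Ds * Ds"
  have Gc: "G \<in> carrier_mat p p" unfolding G_def using Ds by auto
  have row: "(\<Sum>b<p. (\<Sum>j<L. Ds $$ (j, a) * Ds $$ (j, b)) * Gi $$ (b, i)) = basis i a" if a: "a < p" for a
  proof -
    have "(G * Gi) $$ (a, i) = (\<Sum>b<p. G $$ (a, b) * Gi $$ (b, i))"
      using a i Gc Gi by (simp add: scalar_prod_def atLeast0LessThan)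
    then show ?thesis
      using a i inv by (simp add: G_def gram_entry[OF Ds a] basis_def)
  qed
  have "(\<Sum>j<L. (\<Sum>b<p. Gi $$ (b, i) * Ds $$ (j, b))\<^sup>2)
      = (\<Sum>a<p. Gi $$ (a, i) * (\<Sum>b<p. (\<Sum>j<L. Ds $$ (j, a) * Ds $$ (j, b)) * Gi $$ (b, i)))"
    unfolding power2_eq_square sum_product
    by (simp add: sum_distrib_left sum_distrib_right sum.swap[of _ "{..<L}"] algebra_simps)
  also have "\<dots> = (\<Sum>a<p. Gi $$ (a, i) * basis i a)" by (simp add: row)
  also have "\<dots> = Gi $$ (i, i)" using i by (simp add: sum_basis)
  finally show ?thesis .
qed

lemma exists_kernel_vector:
  fixes D :: "nat \<Rightarrow> nat \<Rightarrow> real"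
  assumes LN: "L < N"
  shows "\<exists>v l0. l0 < N \<and> v l0 \<noteq> 0 \<and> (\<forall>j<L. (\<Sum>l<N. D j l * v l) = 0)"
proof -
  define A where "A = mat N N (\<lambda>(j, l). if j < L then D j l else 0)"
  have Ac: "A \<in> carrier_mat N N" unfolding A_def by simp
  text \<open>Row \<open>L\<close> of the padded square matrix \<open>A\<close> vanishes, so \<open>A\<close> is singular.\<close>
  have "transpose_mat A *\<^sub>v unit_vec N L = 0\<^sub>v N"
    using Ac LN by (intro eq_vecI) (auto simp: scalar_prod_right_unit A_def)
  moreover have "unit_vec N L \<noteq> (0\<^sub>v N :: real vec)"
    using LN by (metis index_unit_vec(1) index_zero_vec(1) zero_neq_one)
  ultimately have "Determinant.det (transpose_mat A) = 0"
    using det_0_iff_vec_prod_zero[of "transpose_mat A" N] Ac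
    by (auto intro!: exI[of _ "unit_vec N L"])
  then have "Determinant.det A = 0" using det_transpose[OF Ac] by simp
  then obtain c where c: "c \<in> carrier_vec N" "c \<noteq> 0\<^sub>v N" "A *\<^sub>v c = 0\<^sub>v N"
    using det_0_iff_vec_prod_zero[OF Ac] by blast
  obtain l0 where l0: "l0 < N" "c $ l0 \<noteq> 0"
    using c(1,2) by (metis eq_vecI carrier_vecD index_zero_vec(1) index_zero_vec(2))
  have "(\<Sum>l<N. D j l * c $ l) = 0" if j: "j < L" for j
  proof -
    have "(A *\<^sub>v c) $ j = 0" using c(3) j LN by simp
    then show ?thesis using j LN c(1) Ac by (simp add: A_def scalar_prod_def atLeast0LessThan)
  qed
  then show ?thesis using l0 by blast
qed

section \<open>Part (a): no \<open>\<X>\<close>-unbiased estimator when fewer than \<open>k\<close> blocks are active\<close>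

text \<open>Every coordinate direction is feasible, so \<open>D\<^sup>T C = \<sigma>\<^sup>2 I\<close> for the matrix \<open>C\<close> of cross
  moments; applying this to a kernel vector \<open>v\<close> of \<open>D\<close> gives \<open>\<sigma>\<^sup>2 v = C\<^sup>T D v = 0\<close>.\<close>

lemma no_X_unbiased_estimator:
  assumes d: "d > 0" and sp: "\<sigma> > 0" and LN: "L < M * d" and x: "x \<in> Xset M d k"
    and free: "card (bsupp M d x) < k"
    and est: "estimator L (M * d) xh" and fv: "finite_var L (M * d) D \<sigma> xh x"
  shows "\<not> X_unbiased L M d k D \<sigma> xh x"
proof
  assume U: "X_unbiased L M d k D \<sigma> xh x"
  obtain v l0 where l0: "l0 < M * d" "v l0 \<noteq> 0" and v: "\<forall>j<L. (\<Sum>l<M * d. D j l * v l) = 0"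
    using exists_kernel_vector[OF LN, of D] by blast
  define C where "C j = cross_moment L (M * d) D \<sigma> xh x l0 j" for j
  have DC: "(\<Sum>j<L. D j l * C j) = \<sigma>\<^sup>2 * basis l0 l" if "l < M * d" for l
    using unbiased_cross_moment[OF d sp x est fv U that l0(1)] free
    unfolding C_def by (simp add: basis_sym)
  have "\<sigma>\<^sup>2 * v l0 = (\<Sum>l<M * d. (\<sigma>\<^sup>2 * v l) * basis l0 l)"
    using l0(1) by (simp add: sum_basis)
  also have "\<dots> = (\<Sum>l<M * d. v l * (\<Sum>j<L. D j l * C j))"
    by (intro sum.cong refl) (simp add: DC)
  also have "\<dots> = (\<Sum>j<L. C j * (\<Sum>l<M * d. D j l * v l))"
    by (simp add: sum_distrib_left sum.swap[of _ "{..<L}"] algebra_simps)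
  also have "\<dots> = 0" using v by simp
  finally show False using sp l0(2) by simp
qed

section \<open>Part (b): the Cramer-Rao type bound\<close>

text \<open>Expanding \<open>E[(X - \<Sum>\<^sub>j r\<^sub>j Z\<^sub>j)\<^sup>2] \<ge> 0\<close>.\<close>

lemma expectation_sq_ge_linear_form:
  fixes X :: "'a \<Rightarrow> real" and Z :: "nat \<Rightarrow> 'a \<Rightarrow> real"
  assumes iX: "integrable M (\<lambda>y. (X y)\<^sup>2)"
    and iXZ: "\<And>j. j < L \<Longrightarrow> integrable M (\<lambda>y. X y * Z j y)"
    and iZZ: "\<And>j k. j < L \<Longrightarrow> k < L \<Longrightarrow> integrable M (\<lambda>y. Z j y * Z k y)"
  shows "2 * (\<Sum>j<L. r j * (\<integral>y. X y * Z j y \<partial>M))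
           - (\<Sum>j<L. \<Sum>k<L. r j * r k * (\<integral>y. Z j y * Z k y \<partial>M)) \<le> (\<integral>y. (X y)\<^sup>2 \<partial>M)"
proof -
  have i1: "integrable M (\<lambda>y. \<Sum>j<L. r j * (X y * Z j y))"
    using iXZ by (intro Bochner_Integration.integrable_sum integrable_mult_right) auto
  have i2: "integrable M (\<lambda>y. \<Sum>j<L. \<Sum>k<L. r j * r k * (Z j y * Z k y))"
    using iZZ by (intro Bochner_Integration.integrable_sum integrable_mult_right) auto
  have expand: "(X y - (\<Sum>j<L. r j * Z j y))\<^sup>2
      = ((X y)\<^sup>2 - 2 * (\<Sum>j<L. r j * (X y * Z j y))) + (\<Sum>j<L. \<Sum>k<L. r j * r k * (Z j y * Z k y))" for y
  proof -
    have "(\<Sum>j<L. r j * Z j y)\<^sup>2 = (\<Sum>j<L. \<Sum>k<L. r j * r k * (Z j y * Z k y))"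
      unfolding power2_eq_square sum_product by (simp add: algebra_simps)
    moreover have "X y * (\<Sum>j<L. r j * Z j y) = (\<Sum>j<L. r j * (X y * Z j y))"
      by (simp add: sum_distrib_left algebra_simps)
    ultimately show ?thesis unfolding power2_diff by simp
  qed
  have "(\<integral>y. (\<Sum>j<L. \<Sum>k<L. r j * r k * (Z j y * Z k y)) \<partial>M)
      = (\<Sum>j<L. \<Sum>k<L. r j * r k * (\<integral>y. Z j y * Z k y \<partial>M))"
  proof -
    have "(\<integral>y. (\<Sum>j<L. \<Sum>k<L. r j * r k * (Z j y * Z k y)) \<partial>M)
        = (\<Sum>j<L. \<integral>y. (\<Sum>k<L. r j * r k * (Z j y * Z k y)) \<partial>M)"
      using iZZ by (intro Bochner_Integration.integral_sum)
        (auto intro!: Bochner_Integration.integrable_sum integrable_mult_right)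
    also have "\<dots> = (\<Sum>j<L. \<Sum>k<L. r j * r k * (\<integral>y. Z j y * Z k y \<partial>M))"
      using iZZ by (intro sum.cong refl)
        (simp add: Bochner_Integration.integral_sum integrable_mult_right)
    finally show ?thesis .
  qed
  moreover have "(\<integral>y. (\<Sum>j<L. r j * (X y * Z j y)) \<partial>M) = (\<Sum>j<L. r j * (\<integral>y. X y * Z j y \<partial>M))"
    using iXZ by (simp add: Bochner_Integration.integral_sum integrable_mult_right)
  moreover have "0 \<le> (\<integral>y. (X y - (\<Sum>j<L. r j * Z j y))\<^sup>2 \<partial>M)"
    by (rule Bochner_Integration.integral_nonneg) simp
  ultimately show ?thesis unfolding expand using iX i1 i2 by simp
qed

lemma integrable_shifted_sq:
  fixes f :: "'a \<Rightarrow> real"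
  assumes "integrable M (\<lambda>y. (f y)\<^sup>2)" "f \<in> borel_measurable M" "finite_measure M"
  shows "integrable M (\<lambda>y. (f y - c)\<^sup>2)"
proof (rule Bochner_Integration.integrable_bound[where f = "\<lambda>y. 2 * (f y)\<^sup>2 + 2 * c\<^sup>2"])
  interpret finite_measure M by fact
  show "integrable M (\<lambda>y. 2 * (f y)\<^sup>2 + 2 * c\<^sup>2)"
    by (intro Bochner_Integration.integrable_add integrable_mult_right assms(1) integrable_const)
  have "(f y - c)\<^sup>2 \<le> 2 * (f y)\<^sup>2 + 2 * c\<^sup>2" for y
    using zero_le_power2[of "f y + c"] by (simp add: power2_eq_square algebra_simps)
  then show "AE y in M. norm ((f y - c)\<^sup>2) \<le> norm (2 * (f y)\<^sup>2 + 2 * c\<^sup>2)" by simp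
qed (use assms(2) in measurable)

text \<open>For one coordinate \<open>m\<close> and any weights \<open>r\<close> on the observations, the mean square error
  of \<open>xh\<^sub>m\<close> is at least \<open>2 \<langle>r, C\<^sub>m\<rangle> - \<sigma>\<^sup>2 \<parallel>r\<parallel>\<^sup>2\<close>, since the noise has covariance \<open>\<sigma>\<^sup>2 I\<close>.\<close>

lemma coordinate_error_lower_bound:
  assumes sp: "\<sigma> > 0" and est: "estimator L N xh" and fv: "finite_var L N D \<sigma> xh x" and m: "m < N"
  shows "2 * (\<Sum>j<L. r j * cross_moment L N D \<sigma> xh x m j) - \<sigma>\<^sup>2 * (\<Sum>j<L. (r j)\<^sup>2)
           \<le> (\<integral>y. (xh y m - x m)\<^sup>2 \<partial>obs L N D \<sigma> x)"
proof -
  define a where "a = matvec L N D x"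
  define P where "P = gauss L \<sigma> a"
  define X where "X y = xh y m - x m" for y
  define Z where "Z j y = y j - a j" for j y
  interpret P: prob_space P unfolding P_def by (rule prob_space_gauss[OF sp])
  have Xm: "X \<in> borel_measurable P"
    unfolding X_def P_def using estimator_measurable[OF est m] by measurable
  have iX: "integrable P (\<lambda>y. (X y)\<^sup>2)"
    unfolding X_def P_def a_def
    by (rule integrable_shifted_sq[OF integrable_estimator_sq[OF sp fv m] estimator_measurable[OF est m]])
       (use prob_space_gauss[OF sp] in \<open>simp add: prob_space_def\<close>)
  have Zm: "Z j \<in> borel_measurable P" if "j < L" for j
    unfolding Z_def P_def measurable_gauss using that by simp
  have iZ: "integrable P (\<lambda>y. (Z j y)\<^sup>2)" if "j < L" for j
    unfolding Z_def P_def by (rule integrable_centered_sq[OF sp that])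
  have iXZ: "integrable P (\<lambda>y. X y * Z j y)" if "j < L" for j
    by (rule integrable_mult_of_squares[OF iX iZ[OF that] Xm Zm[OF that]])
  have iZZ: "integrable P (\<lambda>y. Z j y * Z k y)" if "j < L" "k < L" for j k
    by (rule integrable_mult_of_squares[OF iZ[OF that(1)] iZ[OF that(2)] Zm[OF that(1)] Zm[OF that(2)]])
  have XZ: "(\<integral>y. X y * Z j y \<partial>P) = cross_moment L N D \<sigma> xh x m j" if j: "j < L" for j
  proof -
    have "(\<integral>y. X y * Z j y \<partial>P) = (\<integral>y. xh y m * Z j y - x m * Z j y \<partial>P)"
      unfolding X_def by (simp add: algebra_simps)
    also have "\<dots> = (\<integral>y. xh y m * Z j y \<partial>P) - x m * (\<integral>y. Z j y \<partial>P)"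
      using integrable_estimator_noise[OF sp est fv m j] integrable_centered[OF sp j]
      by (simp add: Z_def P_def a_def)
    also have "(\<integral>y. Z j y \<partial>P) = 0" unfolding Z_def P_def by (rule centered_mean[OF sp j])
    finally show ?thesis
      unfolding cross_moment_def obs_eq_gauss[OF sp] Z_def P_def a_def by simp
  qed
  have ZZ: "(\<Sum>j<L. \<Sum>k<L. r j * r k * (\<integral>y. Z j y * Z k y \<partial>P)) = \<sigma>\<^sup>2 * (\<Sum>j<L. (r j)\<^sup>2)"
  proof -
    have "(\<Sum>j<L. \<Sum>k<L. r j * r k * (\<integral>y. Z j y * Z k y \<partial>P))
        = (\<Sum>j<L. \<Sum>k<L. (\<sigma>\<^sup>2 * r j * r k) * basis j k)"
      unfolding Z_def P_def by (intro sum.cong refl) (simp add: centered_covariance[OF sp] basis_sym)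
    also have "\<dots> = (\<Sum>j<L. \<sigma>\<^sup>2 * r j * r j)"
    proof (intro sum.cong refl)
      fix j assume "j \<in> {..<L}"
      then show "(\<Sum>k<L. \<sigma>\<^sup>2 * r j * r k * basis j k) = \<sigma>\<^sup>2 * r j * r j"
        using sum_basis[where g = "\<lambda>k. \<sigma>\<^sup>2 * r j * r k" and n = L and l = j] by simp
    qed
    also have "\<dots> = \<sigma>\<^sup>2 * (\<Sum>j<L. (r j)\<^sup>2)"
      by (simp add: sum_distrib_left power2_eq_square mult.assoc)
    finally show ?thesis .
  qed
  have "(\<integral>y. (X y)\<^sup>2 \<partial>P) = (\<integral>y. (xh y m - x m)\<^sup>2 \<partial>obs L N D \<sigma> x)"
    unfolding X_def P_def a_def obs_eq_gauss[OF sp] ..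
  moreover have "(\<Sum>j<L. r j * (\<integral>y. X y * Z j y \<partial>P)) = (\<Sum>j<L. r j * cross_moment L N D \<sigma> xh x m j)"
    by (intro sum.cong refl) (simp add: XZ)
  moreover have "2 * (\<Sum>j<L. r j * (\<integral>y. X y * Z j y \<partial>P))
      - (\<Sum>j<L. \<Sum>k<L. r j * r k * (\<integral>y. Z j y * Z k y \<partial>P)) \<le> (\<integral>y. (X y)\<^sup>2 \<partial>P)"
    by (rule expectation_sq_ge_linear_form[OF iX]) (use iXZ iZZ in auto)
  ultimately show ?thesis unfolding ZZ by simp
qed


lemma MSE_eq_sum_coordinates:
  assumes sp: "\<sigma> > 0" and est: "estimator L N xh" and fv: "finite_var L N D \<sigma> xh x"
  shows "MSE L N D \<sigma> xh x = (\<Sum>l<N. \<integral>y. (xh y l - x l)\<^sup>2 \<partial>obs L N D \<sigma> x)"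
  unfolding MSE_def obs_eq_gauss[OF sp]
proof (rule Bochner_Integration.integral_sum)
  fix l assume "l \<in> {..<N}"
  then show "integrable (gauss L \<sigma> (matvec L N D x)) (\<lambda>y. (xh y l - x l)\<^sup>2)"
    using integrable_estimator_sq[OF sp fv] estimator_measurable[OF est] prob_space_gauss[OF sp]
    by (intro integrable_shifted_sq) (auto simp: prob_space_def)
qed

lemma block_cols_distinct: "distinct (block_cols M d S)"
  unfolding block_cols_def by simp

lemma set_block_cols: "set (block_cols M d S) = {l. l < M * d \<and> l div d \<in> S}"
  unfolding block_cols_def by auto

text \<open>For a column \<open>i\<close> of an active block, the weights \<open>r = D\<^sub>S (D\<^sub>S\<^sup>T D\<^sub>S)\<^sup>-\<^sup>1 e\<^sub>i\<close> satisfy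
  \<open>\<langle>r, C\<^sub>m\<rangle> = \<sigma>\<^sup>2 (D\<^sub>S\<^sup>T D\<^sub>S)\<^sup>-\<^sup>1\<^sub>i\<^sub>i\<close> (by unbiasedness in the active directions) and
  \<open>\<parallel>r\<parallel>\<^sup>2 = (D\<^sub>S\<^sup>T D\<^sub>S)\<^sup>-\<^sup>1\<^sub>i\<^sub>i\<close>; the coordinate bound then reads \<open>\<sigma>\<^sup>2 (D\<^sub>S\<^sup>T D\<^sub>S)\<^sup>-\<^sup>1\<^sub>i\<^sub>i\<close>.\<close>

lemma active_coordinate_bound:
  fixes L M d :: nat and D :: "nat \<Rightarrow> nat \<Rightarrow> real" and x :: "nat \<Rightarrow> real" and Gi :: "real mat"
  defines "cs \<equiv> block_cols M d (bsupp M d x)" and "Ds \<equiv> subD L M d D (bsupp M d x)"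
  assumes d: "d > 0" and sp: "\<sigma> > 0" and x: "x \<in> Xset M d k"
    and est: "estimator L (M * d) xh" and fv: "finite_var L (M * d) D \<sigma> xh x"
    and U: "X_unbiased L M d k D \<sigma> xh x"
    and Gi: "Gi \<in> carrier_mat (length cs) (length cs)"
    and inv: "(transpose_mat Ds * Ds) * Gi = 1\<^sub>m (length cs)"
    and i: "i < length cs"
  shows "\<sigma>\<^sup>2 * Gi $$ (i, i) \<le> (\<integral>y. (xh y (cs ! i) - x (cs ! i))\<^sup>2 \<partial>obs L (M * d) D \<sigma> x)"
proof -
  define p where "p = length cs"
  define r where "r j = (\<Sum>b<p. Gi $$ (b, i) * Ds $$ (j, b))" for j
  have Dsc: "Ds \<in> carrier_mat L p" and Dse: "\<And>j b. j < L \<Longrightarrow> b < p \<Longrightarrow> Ds $$ (j, b) = D j (cs ! b)"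
    unfolding Ds_def subD_def cs_def p_def Let_def by auto
  have csN: "cs ! b < M * d" and csS: "cs ! b div d \<in> bsupp M d x" if "b < p" for b
    using nth_mem[of b cs] that set_block_cols unfolding p_def cs_def by auto
  have cs_basis: "basis (cs ! b) (cs ! i) = basis i b" if "b < p" for b
    using that i block_cols_distinct nth_eq_iff_index_eq unfolding basis_def p_def cs_def by metis
  have "(\<Sum>j<L. r j * cross_moment L (M * d) D \<sigma> xh x (cs ! i) j)
      = (\<Sum>b<p. Gi $$ (b, i) * (\<Sum>j<L. D j (cs ! b) * cross_moment L (M * d) D \<sigma> xh x (cs ! i) j))"
    unfolding r_def
    by (simp add: Dse sum_distrib_left sum_distrib_right sum.swap[of _ "{..<L}"] algebra_simps)
  also have "\<dots> = (\<Sum>b<p. (\<sigma>\<^sup>2 * Gi $$ (b, i)) * basis i b)"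
    using unbiased_cross_moment[OF d sp x est fv U csN csN[OF i[folded p_def]]] csS cs_basis
    by (intro sum.cong refl) auto
  also have "\<dots> = \<sigma>\<^sup>2 * Gi $$ (i, i)" using i by (simp add: sum_basis p_def)
  finally have "(\<Sum>j<L. r j * cross_moment L (M * d) D \<sigma> xh x (cs ! i) j) = \<sigma>\<^sup>2 * Gi $$ (i, i)" .
  moreover have "(\<Sum>j<L. (r j)\<^sup>2) = Gi $$ (i, i)"
    unfolding r_def p_def by (rule gram_inverse_column_norm[OF Dsc[unfolded p_def] Gi inv i])
  ultimately show ?thesis
    using coordinate_error_lower_bound[OF sp est fv csN[OF i[folded p_def]], of r]
    by (simp add: mult.commute)
qed

text \<open>Summing the coordinate bounds over the columns of the active blocks.  Only the active
  directions are used, so no assumption on the number of active blocks is needed.\<close>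

lemma MSE_lower_bound:
  assumes d: "d > 0" and sp: "\<sigma> > 0" and x: "x \<in> Xset M d k"
    and est: "estimator L (M * d) xh" and fv: "finite_var L (M * d) D \<sigma> xh x"
    and U: "X_unbiased L M d k D \<sigma> xh x"
    and fr: "full_col_rank (subD L M d D (bsupp M d x))"
  shows "\<sigma>\<^sup>2 * mat_trace (mat_inv (transpose_mat (subD L M d D (bsupp M d x)) * subD L M d D (bsupp M d x)))
           \<le> MSE L (M * d) D \<sigma> xh x"
proof -
  define cs where "cs = block_cols M d (bsupp M d x)"
  define p where "p = length cs"
  define Ds where "Ds = subD L M d D (bsupp M d x)"
  define Gi where "Gi = mat_inv (transpose_mat Ds * Ds)"
  define E where "E l = (\<integral>y. (xh y l - x l)\<^sup>2 \<partial>obs L (M * d) D \<sigma> x)" for l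
  have "Ds \<in> carrier_mat L p" unfolding Ds_def subD_def cs_def p_def Let_def by auto
  then have Gic: "Gi \<in> carrier_mat p p" and inv: "(transpose_mat Ds * Ds) * Gi = 1\<^sub>m p"
    using mat_inv_right_inverse[OF _ gram_det_nonzero] fr unfolding Gi_def Ds_def by auto
  have "\<sigma>\<^sup>2 * mat_trace Gi = (\<Sum>i<p. \<sigma>\<^sup>2 * Gi $$ (i, i))"
    unfolding mat_trace_def using Gic by (simp add: sum_distrib_left)
  also have "\<dots> \<le> (\<Sum>i<p. E (cs ! i))"
    using active_coordinate_bound[OF d sp x est fv U Gic[unfolded p_def cs_def] inv[unfolded p_def cs_def Ds_def]]
    unfolding E_def p_def cs_def by (intro sum_mono) simp
  also have "\<dots> = (\<Sum>l\<in>set cs. E l)"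
    by (rule sum.reindex_bij_betw) (rule bij_betw_nth[OF block_cols_distinct[of M d "bsupp M d x", folded cs_def]],
        simp_all add: p_def)
  also have "\<dots> \<le> (\<Sum>l<M * d. E l)"
    by (rule sum_mono2) (auto simp: set_block_cols cs_def E_def)
  also have "\<dots> = MSE L (M * d) D \<sigma> xh x"
    unfolding E_def by (rule MSE_eq_sum_coordinates[OF sp est fv, symmetric])
  finally show ?thesis unfolding Gi_def Ds_def .
qed

theorem theorem3:
  fixes L M d k :: nat and D :: "nat \<Rightarrow> nat \<Rightarrow> real" and \<sigma> :: real and x :: "nat \<Rightarrow> real"
  assumes d_pos: "d > 0" and M_pos: "M > 0"
    and sigma_pos: "\<sigma> > 0"
    and L_lt_N: "L < M * d"
    and unit_cols: "\<forall>l<M * d. (\<Sum>j<L. (D j l)\<^sup>2) = 1"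
    and rank: "\<forall>I. I \<subseteq> {..<M} \<and> card I \<le> k \<longrightarrow> full_col_rank (subD L M d D I)"
    and x_in: "x \<in> Xset M d k"
  shows "(card (bsupp M d x) < k \<longrightarrow>
            (\<forall>xh. estimator L (M * d) xh \<and> finite_var L (M * d) D \<sigma> xh x \<longrightarrow>
                   \<not> X_unbiased L M d k D \<sigma> xh x))
       \<and> (card (bsupp M d x) = k \<longrightarrow>
            (\<forall>xh. estimator L (M * d) xh \<and> finite_var L (M * d) D \<sigma> xh x \<and> X_unbiased L M d k D \<sigma> xh x \<longrightarrow>
                   MSE L (M * d) D \<sigma> xh x \<ge>
                     \<sigma>\<^sup>2 * mat_trace (mat_inv (transpose_mat (subD L M d D (bsupp M d x)) * subD L M d D (bsupp M d x)))))"
proof (intro conjI impI allI)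
  fix xh
  assume "card (bsupp M d x) < k" and "estimator L (M * d) xh \<and> finite_var L (M * d) D \<sigma> xh x"
  then show "\<not> X_unbiased L M d k D \<sigma> xh x"
    using no_X_unbiased_estimator[OF d_pos sigma_pos L_lt_N x_in] by blast
next
  fix xh
  assume h: "estimator L (M * d) xh \<and> finite_var L (M * d) D \<sigma> xh x \<and> X_unbiased L M d k D \<sigma> xh x"
  have "bsupp M d x \<subseteq> {..<M}" and "card (bsupp M d x) \<le> k"
    using x_in by (auto simp: bsupp_def Xset_def)
  then have "full_col_rank (subD L M d D (bsupp M d x))" using rank by blast
  then show "MSE L (M * d) D \<sigma> xh x \<ge>
      \<sigma>\<^sup>2 * mat_trace (mat_inv (transpose_mat (subD L M d D (bsupp M d x)) * subD L M d D (bsupp M d x)))"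
    using MSE_lower_bound[OF d_pos sigma_pos x_in] h by blast
qed

end
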